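(* Let $K\subseteq\mathbb{R}^n$ be a compact convex set and $P=\{\mathbf{x}\in\mathbb{R}^n:\mathsf{A}\mathbf{x}\le\mathbf{b}\}$, $\mathsf{A}\in\mathbb{R}^{m\times n}$, $\mathbf{b}\in\mathbb{R}^m$, with $P\cap K=\emptyset$. For $\boldsymbol\varepsilon\in\mathbb{R}^m$ let $P_{\boldsymbol\varepsilon}:=\{\mathbf{x}\in\mathbb{R}^n:\mathsf{A}\mathbf{x}\le\mathbf{b}+\boldsymbol\varepsilon\}$. Then for every $\boldsymbol\varepsilon\in\mathbb{R}^m$, either $K\cap P_{\boldsymbol\varepsilon}=\emptyset$, or there exists $j\in[m]$ with $\varepsilon_j>0$ and $K\cap P_{\boldsymbol\varepsilon-(n+1)\varepsilon_j\mathbf{e}_j}=\emptyset$.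
   Context: $\mathbf{e}_j$ denotes the $j$-th standard basis vector of $\mathbb{R}^m$. *)

theory Defs
  imports "HOL-Analysis.Analysis"
begin

definition polyh :: "real^'n^'m \<Rightarrow> real^'m \<Rightarrow> (real^'n) set" where
  "polyh A b = {x. \<forall>i. (A *v x) $ i \<le> b $ i}"

end

theory Submission
  imports Defs
begin

text \<open>
  Suppose K meets the relaxed polyhedron with slack eps and, for every j with eps_j > 0,
  also the polyhedron in which the j-th constraint is tightened by (n+1) eps_j; pick a
  witness x_j of the latter. For any set S of at most n+1 such indices, the average of the
  x_j (j in S) lies in K and in the relaxed polyhedron, and satisfies the j-th constraint
  of the original polyhedron for every j in S: the deficit (n+1) eps_j of x_j outweighs the
  excess of at most eps_j of each of the other |S| - 1 <= n points. Helly's theorem then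
  yields a point of K in the relaxed polyhedron meeting every constraint with eps_j > 0
  exactly; the remaining constraints hold since there eps_j <= 0.
\<close>

lemma Helly_indexed:
  fixes C :: "'i \<Rightarrow> 'a::euclidean_space set"
  assumes "finite I" and "I \<noteq> {}" and "\<And>i. i \<in> I \<Longrightarrow> convex (C i)"
    and "\<And>S. S \<subseteq> I \<Longrightarrow> S \<noteq> {} \<Longrightarrow> card S \<le> DIM('a) + 1 \<Longrightarrow> (\<Inter>i\<in>S. C i) \<noteq> {}"
  shows "(\<Inter>i\<in>I. C i) \<noteq> {}"
proof -
  have small: "\<Inter>\<T> \<noteq> {}"
    if \<T>: "\<T> \<subseteq> C ` I" "\<T> \<noteq> {}" "card \<T> \<le> DIM('a) + 1" for \<T>
  proof -
    define S where "S = inv_into I C ` \<T>"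
    have "C ` S = \<T>"
      unfolding S_def using image_inv_into_cancel[OF refl \<T>(1)] by simp
    moreover have "S \<subseteq> I"
      unfolding S_def using \<T>(1) by (auto intro: inv_into_into)
    moreover have "card S \<le> card \<T>"
      unfolding S_def using finite_subset[OF \<T>(1)] \<open>finite I\<close> card_image_le by blast
    moreover have "S \<noteq> {}"
      using \<open>C ` S = \<T>\<close> \<T>(2) by auto
    ultimately have "(\<Inter>i\<in>S. C i) \<noteq> {}"
      using assms(4) \<T>(3) by (meson order_trans)
    with \<open>C ` S = \<T>\<close> show ?thesis by simp
  qed
  have "\<Inter>(C ` I) \<noteq> {}"
  proof (cases "card (C ` I) \<ge> DIM('a) + 1")
    case True
    show ?thesis
    proof (rule Helly[OF True])
      show "\<forall>s\<in>C ` I. convex s"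
        using assms(3) by blast
      fix \<T> assume "\<T> \<subseteq> C ` I" and "card \<T> = DIM('a) + 1"
      then show "\<Inter>\<T> \<noteq> {}"
        by (intro small) auto
    qed
  next
    case False
    then show ?thesis
      using \<open>I \<noteq> {}\<close> by (intro small) auto
  qed
  then show ?thesis by simp
qed

lemma convex_polyh: "convex (polyh A b)"
proof -
  have "polyh A b = (\<Inter>i. {x. inner (A $ i) x \<le> b $ i})"
    by (auto simp: polyh_def matrix_vector_mul_component)
  then show ?thesis
    by (simp add: convex_INT convex_halfspace_le)
qed

lemma polyh_tighten_row_iff:
  assumes "0 \<le> d"
  shows "x \<in> polyh A (b - d *\<^sub>R axis j 1) \<longleftrightarrow>
    x \<in> polyh A b \<and> (A *v x) $ j \<le> b $ j - d"
proof -
  have row: "(b - d *\<^sub>R axis j 1) $ i = b $ i - (if i = j then d else 0)" for i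
    by (simp add: axis_def)
  show ?thesis
  proof
    assume "x \<in> polyh A (b - d *\<^sub>R axis j 1)"
    then have "(A *v x) $ i \<le> b $ i - (if i = j then d else 0)" for i
      unfolding polyh_def row by blast
    with assms show "x \<in> polyh A b \<and> (A *v x) $ j \<le> b $ j - d"
      unfolding polyh_def by (smt (verit) mem_Collect_eq)
  next
    assume "x \<in> polyh A b \<and> (A *v x) $ j \<le> b $ j - d"
    then show "x \<in> polyh A (b - d *\<^sub>R axis j 1)"
      unfolding polyh_def row by auto
  qed
qed

lemma sum_le_card_mult_if_one_tight:
  fixes a :: "'k \<Rightarrow> real" and \<beta> \<delta> :: real
  assumes "finite S" and "j \<in> S" and "real (card S) \<le> M" and "0 \<le> \<delta>"
    and "\<And>k. k \<in> S \<Longrightarrow> a k \<le> \<beta> + \<delta>" and "a j \<le> \<beta> + \<delta> - M * \<delta>"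
  shows "(\<Sum>k\<in>S. a k) \<le> card S * \<beta>"
proof -
  have "(\<Sum>k\<in>S. a k) = a j + (\<Sum>k\<in>S - {j}. a k)"
    using assms(1,2) by (simp add: sum.remove)
  also have "\<dots> \<le> (\<beta> + \<delta> - M * \<delta>) + (\<Sum>k\<in>S - {j}. \<beta> + \<delta>)"
    using assms(5,6) by (intro add_mono sum_mono) auto
  also have "\<dots> = card S * \<beta> + (card S - M) * \<delta>"
  proof -
    have "real (card S) = real (card (S - {j})) + 1"
      using card.remove[OF assms(1,2)] by simp
    then show ?thesis by (simp add: algebra_simps)
  qed
  also have "\<dots> \<le> card S * \<beta>"
    using assms(3,4) by (simp add: mult_nonpos_nonneg)
  finally show ?thesis .
qed

lemma average_of_tightened_witnesses:
  fixes K :: "(real^'n) set" and A :: "real^'n^'m"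
  assumes "convex K" and "finite S" and "S \<noteq> {}" and "card S \<le> CARD('n) + 1"
    and pos: "\<And>k. k \<in> S \<Longrightarrow> \<epsilon> $ k > 0"
    and X: "\<And>k. k \<in> S \<Longrightarrow>
      X k \<in> K \<inter> polyh A (b + \<epsilon> - ((real CARD('n) + 1) * \<epsilon> $ k) *\<^sub>R axis k 1)"
  defines "y \<equiv> (\<Sum>k\<in>S. (1 / card S) *\<^sub>R X k)"
  shows "y \<in> K \<inter> polyh A (b + \<epsilon>)" and "\<forall>j\<in>S. (A *v y) $ j \<le> b $ j"
proof -
  have card_pos: "real (card S) > 0"
    using assms(2,3) by (simp add: card_gt_0_iff)
  have XP: "X k \<in> K \<inter> polyh A (b + \<epsilon>)"
    and Xj: "(A *v X k) $ k \<le> b $ k + \<epsilon> $ k - (real CARD('n) + 1) * \<epsilon> $ k"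
    if "k \<in> S" for k
    using X[OF that] pos[OF that]
      polyh_tighten_row_iff[where b = "b + \<epsilon>" and d = "(real CARD('n) + 1) * \<epsilon> $ k"]
    by auto
  show "y \<in> K \<inter> polyh A (b + \<epsilon>)"
    unfolding y_def using card_pos XP \<open>finite S\<close>
    by (intro convex_sum convex_Int \<open>convex K\<close> convex_polyh) auto
  show "\<forall>j\<in>S. (A *v y) $ j \<le> b $ j"
  proof
    fix j assume "j \<in> S"
    have "(\<Sum>k\<in>S. (A *v X k) $ j) \<le> card S * b $ j"
    proof (rule sum_le_card_mult_if_one_tight[OF \<open>finite S\<close> \<open>j \<in> S\<close>])
      show "real (card S) \<le> real CARD('n) + 1"
        using assms(4) by linarith
      show "(A *v X k) $ j \<le> b $ j + \<epsilon> $ j" if "k \<in> S" for k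
        using XP[OF that] by (simp add: polyh_def)
    qed (use pos Xj \<open>j \<in> S\<close> in \<open>auto intro: less_imp_le\<close>)
    moreover have "(A *v y) $ j = (\<Sum>k\<in>S. (A *v X k) $ j) / card S"
      unfolding y_def by (simp add: vec.sum matrix_vector_mult_scaleR sum_divide_distrib)
    ultimately show "(A *v y) $ j \<le> b $ j"
      using card_pos by (simp add: divide_le_eq mult.commute)
  qed
qed

lemma inter_polyh_nonempty_if_tightenings_nonempty:
  fixes K :: "(real^'n) set" and A :: "real^'n^'m"
  assumes "convex K" and "K \<inter> polyh A (b + \<epsilon>) \<noteq> {}"
    and tight: "\<And>j. \<epsilon> $ j > 0 \<Longrightarrow>
      K \<inter> polyh A (b + \<epsilon> - ((real CARD('n) + 1) * \<epsilon> $ j) *\<^sub>R axis j 1) \<noteq> {}"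
  shows "K \<inter> polyh A b \<noteq> {}"
proof -
  define J where "J = {j. \<epsilon> $ j > 0}"
  define C where "C j = K \<inter> polyh A (b + \<epsilon>) \<inter> {x. (A *v x) $ j \<le> b $ j}" for j
  have in_polyh_if_tight_on_J: "x \<in> polyh A b"
    if "x \<in> polyh A (b + \<epsilon>)" and "\<forall>j\<in>J. (A *v x) $ j \<le> b $ j" for x
    unfolding polyh_def
  proof (intro CollectI allI)
    fix i
    show "(A *v x) $ i \<le> b $ i"
    proof (cases "i \<in> J")
      case True
      with that(2) show ?thesis by blast
    next
      case False
      then have "\<epsilon> $ i \<le> 0"
        unfolding J_def by simp
      moreover have "(A *v x) $ i \<le> b $ i + \<epsilon> $ i"
        using that(1) unfolding polyh_def by simp
      ultimately show ?thesis by linarith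
    qed
  qed
  show ?thesis
  proof (cases "J = {}")
    case True
    with assms(2) in_polyh_if_tight_on_J show ?thesis by auto
  next
    case False
    have "\<forall>j\<in>J. \<exists>x. x \<in> K \<inter> polyh A (b + \<epsilon> - ((real CARD('n) + 1) * \<epsilon> $ j) *\<^sub>R axis j 1)"
      using tight unfolding J_def by blast
    then obtain X where X: "\<forall>j\<in>J.
        X j \<in> K \<inter> polyh A (b + \<epsilon> - ((real CARD('n) + 1) * \<epsilon> $ j) *\<^sub>R axis j 1)"
      by metis
    have "(\<Inter>j\<in>J. C j) \<noteq> {}"
    proof (rule Helly_indexed[OF _ False])
      show "convex (C j)" for j
        unfolding C_def matrix_vector_mul_component
        by (intro convex_Int \<open>convex K\<close> convex_polyh convex_halfspace_le)
      fix S assume S: "S \<subseteq> J" "S \<noteq> {}" "card S \<le> DIM(real^'n) + 1"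
      have "finite S" and "card S \<le> CARD('n) + 1"
        using S(3) by simp_all
      moreover have "\<epsilon> $ k > 0" and "X k \<in> K \<inter>
          polyh A (b + \<epsilon> - ((real CARD('n) + 1) * \<epsilon> $ k) *\<^sub>R axis k 1)" if "k \<in> S" for k
        using that S(1) X unfolding J_def by auto
      ultimately have "(\<Sum>k\<in>S. (1 / card S) *\<^sub>R X k) \<in> C j" if "j \<in> S" for j
        using average_of_tightened_witnesses[OF \<open>convex K\<close> _ S(2)] that
        unfolding C_def by blast
      then show "(\<Inter>j\<in>S. C j) \<noteq> {}" by blast
    qed simp
    then show ?thesis
      using False in_polyh_if_tight_on_J unfolding C_def by blast
  qed
qed

theorem lemma2p3:
  fixes K :: "(real^'n) set" and A :: "real^'n^'m" and b :: "real^'m"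
  assumes "compact K" and "convex K"
    and "polyh A b \<inter> K = {}"
  shows "\<forall>\<epsilon>::real^'m. K \<inter> polyh A (b + \<epsilon>) = {} \<or>
           (\<exists>j. \<epsilon> $ j > 0 \<and>
              K \<inter> polyh A (b + \<epsilon> - ((real CARD('n) + 1) * \<epsilon> $ j) *\<^sub>R (axis j 1 :: real^'m)) = {})"
  using inter_polyh_nonempty_if_tightenings_nonempty[OF \<open>convex K\<close>] assms(3) by blast

end
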